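(* Let $\alpha: I\to M$ be a unit-speed curve on an oriented surface $M\subset E^3$ with Darboux frame $\{T,V,U\}$ and curvatures $k_g,k_n,\tau_g$. Consider the curve $\gamma$ defined in either of the following two cases: (a) $\tau_g\equiv0$, $k_n$ and $k_g$ nowhere zero, and $\gamma(s)=\alpha(s)+\frac{1}{k_g(s)}V(s)$; (b) $\tau_g$ nowhere zero, $\omega$ an antiderivative of $k_nk_g/\tau_g$, $\Omega$ an antiderivative of $e^{\omega}$, $c_8$ a real constant, $y_1=e^{-\omega}(c_8-\Omega)$, $y_2=-\frac{k_n}{\tau_g}y_1$, and $\gamma(s)=\alpha(s)+y_1(s)T(s)+y_2(s)V(s)$. In either case assume $\gamma$ is regular. Then $\gamma$ is a general helix if and only if $\alpha$ is a relatively normal-slant helix on $M$.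
   Context: $M$ is an oriented surface in Euclidean 3-space $E^3$ and $\alpha:I\to M$ is a unit-speed curve with arc-length parameter $s$. Its Darboux frame $\{T,V,U\}$ consists of the unit tangent $T=\alpha'$, the unit surface normal $U$ of $M$ along $\alpha$, and $V=U\times T$; it satisfies $T'=k_gV+k_nU$, $V'=-k_gT+\tau_gU$, $U'=-k_nT-\tau_gV$, where $k_g,k_n,\tau_g$ are the geodesic curvature, normal curvature and geodesic torsion. A regular curve is a general helix if its unit tangent makes a constant angle with a fixed direction. $\alpha$ is a relatively normal-slant helix if $\langle V,d\rangle$ is constant for some fixed unit vector $d$. *)

theory Defs
  imports "HOL-Analysis.Analysis" "HOL-Analysis.Cross3"
begin

text \<open>T = alpha', U = unit surface normal
  along alpha, V = U x T, and the Darboux equations with k_g, k_n, tau_g.\<close>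
definition darboux_frame ::
  "real set \<Rightarrow> (real \<Rightarrow> real^3) \<Rightarrow> (real \<Rightarrow> real^3) \<Rightarrow> (real \<Rightarrow> real^3) \<Rightarrow> (real \<Rightarrow> real^3)
   \<Rightarrow> (real \<Rightarrow> real) \<Rightarrow> (real \<Rightarrow> real) \<Rightarrow> (real \<Rightarrow> real) \<Rightarrow> bool" where
  "darboux_frame I \<alpha> T V U kg kn tg \<longleftrightarrow>
     (\<forall>s\<in>I.
        (\<alpha> has_vector_derivative T s) (at s) \<and>
        norm (T s) = 1 \<and> norm (U s) = 1 \<and> T s \<bullet> U s = 0 \<and>
        V s = cross3 (U s) (T s) \<and>
        (T has_vector_derivative (kg s *\<^sub>R V s + kn s *\<^sub>R U s)) (at s) \<and>
        (V has_vector_derivative (- kg s *\<^sub>R T s + tg s *\<^sub>R U s)) (at s) \<and>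
        (U has_vector_derivative (- kn s *\<^sub>R T s - tg s *\<^sub>R V s)) (at s))"

definition regular_curve :: "real set \<Rightarrow> (real \<Rightarrow> real^3) \<Rightarrow> bool" where
  "regular_curve I \<gamma> \<longleftrightarrow>
     (\<forall>s\<in>I. \<gamma> differentiable (at s) \<and> vector_derivative \<gamma> (at s) \<noteq> 0)"

definition general_helix :: "real set \<Rightarrow> (real \<Rightarrow> real^3) \<Rightarrow> bool" where
  "general_helix I \<gamma> \<longleftrightarrow> regular_curve I \<gamma> \<and>
     (\<exists>d::real^3. norm d = 1 \<and> (\<exists>c. \<forall>s\<in>I.
        (vector_derivative \<gamma> (at s) /\<^sub>R norm (vector_derivative \<gamma> (at s))) \<bullet> d = c))"

definition rel_normal_slant_helix :: "real set \<Rightarrow> (real \<Rightarrow> real^3) \<Rightarrow> bool" where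
  "rel_normal_slant_helix I V \<longleftrightarrow>
     (\<exists>d::real^3. norm d = 1 \<and> (\<exists>c. \<forall>s\<in>I. V s \<bullet> d = c))"

end

theory Submission imports Defs begin

text \<open>In both cases the correction terms are chosen so that the T- and U-components of
  \<open>\<gamma>'\<close> cancel: \<open>\<gamma>' = f V\<close> for a scalar function f, nowhere zero by regularity, so the
  unit tangent of \<gamma> is \<open>sgn f \<cdot> V\<close>. If \<open>\<langle>V, d\<rangle> = c\<close> is constant, then \<open>(\<langle>\<gamma>, d\<rangle>)' = f c\<close>;
  for \<open>c \<noteq> 0\<close> this derivative never vanishes, hence (Darboux) has constant sign, so
  \<open>sgn f\<close> and the angle between the unit tangent and d are constant. Conversely, if
  \<open>sgn f \<cdot> \<langle>V, d\<rangle>\<close> is constant, the continuous function \<open>\<langle>V, d\<rangle>\<close> has constant absolute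
  value on the interval I and is therefore constant.\<close>

lemma DERIV_pos_neg_imp_zero:
  fixes h h' :: "real \<Rightarrow> real"
  assumes "a < b"
    and der: "\<And>x. x \<in> {a..b} \<Longrightarrow> (h has_real_derivative h' x) (at x)"
    and pos: "h' a > 0" and neg: "h' b < 0"
  shows "\<exists>c\<in>{a<..<b}. h' c = 0"
proof -
  \<comment> \<open>h increases to the right of a and decreases to the left of b, so its maximum on
    \<open>[a, b]\<close> is attained in the interior.\<close>
  have cont: "continuous_on {a..b} h"
    using der by (meson DERIV_isCont continuous_at_imp_continuous_on)
  then obtain c where c: "c \<in> {a..b}" and max: "\<And>x. x \<in> {a..b} \<Longrightarrow> h x \<le> h c"
    using continuous_attains_sup[OF compact_Icc _ cont] \<open>a < b\<close> by auto
  obtain d1 where d1: "d1 > 0" "\<And>t. t > 0 \<Longrightarrow> t < d1 \<Longrightarrow> h a < h (a + t)"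
    using DERIV_pos_inc_right[OF der pos] \<open>a < b\<close> by auto
  obtain d2 where d2: "d2 > 0" "\<And>t. t > 0 \<Longrightarrow> t < d2 \<Longrightarrow> h b < h (b - t)"
    using DERIV_neg_dec_left[OF der neg] \<open>a < b\<close> by auto
  have "h a < h (a + min (d1/2) (b - a))"
    using d1 \<open>a < b\<close> by (intro d1(2)) auto
  also have "\<dots> \<le> h c"
    using d1 \<open>a < b\<close> by (intro max) auto
  finally have "c \<noteq> a" by auto
  have "h b < h (b - min (d2/2) (b - a))"
    using d2 \<open>a < b\<close> by (intro d2(2)) auto
  also have "\<dots> \<le> h c"
    using d2 \<open>a < b\<close> by (intro max) auto
  finally have "c \<noteq> b" by auto
  have "h' c = 0"
  proof (rule DERIV_local_max[OF der[OF c]])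
    show "0 < min (c - a) (b - c)"
      using c \<open>c \<noteq> a\<close> \<open>c \<noteq> b\<close> by auto
    show "\<forall>y. \<bar>c - y\<bar> < min (c - a) (b - c) \<longrightarrow> h y \<le> h c"
      by (intro allI impI max) auto
  qed
  then show ?thesis
    using c \<open>c \<noteq> a\<close> \<open>c \<noteq> b\<close> by auto
qed

lemma DERIV_sign_change_imp_zero:
  fixes h h' :: "real \<Rightarrow> real"
  assumes "a < b"
    and der: "\<And>x. x \<in> {a..b} \<Longrightarrow> (h has_real_derivative h' x) (at x)"
    and sign_change: "h' a * h' b < 0"
  shows "\<exists>c\<in>{a<..<b}. h' c = 0"
proof (cases "h' a > 0")
  case True
  then show ?thesis
    using DERIV_pos_neg_imp_zero[OF \<open>a < b\<close> der] sign_change by (simp add: mult_less_0_iff)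
next
  case False
  have "((\<lambda>x. - h x) has_real_derivative - h' x) (at x)" if "x \<in> {a..b}" for x
    using der[OF that] by (rule DERIV_minus)
  then have "\<exists>c\<in>{a<..<b}. - h' c = 0"
    using False sign_change
    by (intro DERIV_pos_neg_imp_zero[OF \<open>a < b\<close>]) (auto simp: mult_less_0_iff)
  then show ?thesis by simp
qed

lemma DERIV_nonzero_imp_sign_constant:
  fixes h h' :: "real \<Rightarrow> real"
  assumes I: "is_interval I"
    and der: "\<And>x. x \<in> I \<Longrightarrow> (h has_real_derivative h' x) (at x)"
    and nonzero: "\<And>x. x \<in> I \<Longrightarrow> h' x \<noteq> 0"
  shows "(\<forall>x\<in>I. h' x > 0) \<or> (\<forall>x\<in>I. h' x < 0)"
proof -
  have same_sign: "h' x * h' y > 0" if xy: "x \<in> I" "y \<in> I" "x < y" for x y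
  proof (rule ccontr)
    assume "\<not> h' x * h' y > 0"
    then have "h' x * h' y < 0"
      using nonzero xy by (simp add: linorder_not_less order_le_less)
    moreover have "{x..y} \<subseteq> I"
      using mem_is_interval_1_I[OF I xy(1,2)] by auto
    ultimately obtain c where "c \<in> {x<..<y}" "h' c = 0"
      using DERIV_sign_change_imp_zero[OF \<open>x < y\<close>, of h h'] der by blast
    then show False
      using nonzero \<open>{x..y} \<subseteq> I\<close> by (meson atLeastAtMost_iff greaterThanLessThan_iff less_imp_le subsetD)
  qed
  have "h' x * h' y > 0" if "x \<in> I" "y \<in> I" for x y
    using same_sign[OF that] same_sign[of y x] that nonzero
    by (cases x y rule: linorder_cases) (auto simp: mult.commute zero_less_mult_iff linorder_neq_iff)
  then show ?thesis
    by (metis zero_less_mult_iff)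
qed

lemma norm_cross3_orthonormal:
  fixes u t :: "real^3"
  assumes "norm u = 1" "norm t = 1" "u \<bullet> t = 0"
  shows "norm (cross3 u t) = 1"
proof -
  have "(norm (cross3 u t))\<^sup>2 = 1"
    using norm_cross_dot[of u t] assms by simp
  then show ?thesis
    using norm_ge_zero[of "cross3 u t"] by (simp add: power2_eq_1_iff)
qed

lemma darboux_frame_norm_V:
  assumes "darboux_frame I \<alpha> T V U kg kn tg" "s \<in> I"
  shows "norm (V s) = 1"
  using assms norm_cross3_orthonormal[of "U s" "T s"]
  unfolding darboux_frame_def by (simp add: inner_commute)

lemma darboux_frame_continuous_on_V:
  assumes "darboux_frame I \<alpha> T V U kg kn tg"
  shows "continuous_on I V"
  using assms unfolding darboux_frame_def
  by (metis continuous_at_imp_continuous_on has_vector_derivative_continuous)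

lemma darboux_frame_has_vector_derivative_offset:
  assumes frame: "darboux_frame I \<alpha> T V U kg kn tg" and "s \<in> I"
    and y1: "(y1 has_real_derivative y1') (at s)"
    and y2: "(y2 has_real_derivative y2') (at s)"
  shows "((\<lambda>s. \<alpha> s + y1 s *\<^sub>R T s + y2 s *\<^sub>R V s) has_vector_derivative
           (1 + y1' - y2 s * kg s) *\<^sub>R T s + (y1 s * kg s + y2') *\<^sub>R V s
             + (y1 s * kn s + y2 s * tg s) *\<^sub>R U s) (at s)"
proof -
  have "((\<lambda>s. \<alpha> s + y1 s *\<^sub>R T s + y2 s *\<^sub>R V s) has_vector_derivative
          T s + (y1 s *\<^sub>R (kg s *\<^sub>R V s + kn s *\<^sub>R U s) + y1' *\<^sub>R T s)
            + (y2 s *\<^sub>R (- kg s *\<^sub>R T s + tg s *\<^sub>R U s) + y2' *\<^sub>R V s)) (at s)"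
    using frame \<open>s \<in> I\<close> y1 y2 unfolding darboux_frame_def
    by (intro has_vector_derivative_add has_vector_derivative_scaleR) auto
  then show ?thesis
    by (simp add: algebra_simps)
qed

lemma vector_derivative_normalized_eq_sgn_scaleR:
  assumes "(\<gamma> has_vector_derivative f *\<^sub>R v) (at s)" "norm v = 1"
  shows "vector_derivative \<gamma> (at s) /\<^sub>R norm (vector_derivative \<gamma> (at s)) = sgn f *\<^sub>R v"
  using vector_derivative_at[OF assms(1)] assms(2) by (simp add: sgn_real_def abs_if)

lemma continuous_on_abs_constant_imp_constant:
  fixes g :: "'a::topological_space \<Rightarrow> real"
  assumes "connected S" "continuous_on S g" "\<And>x. x \<in> S \<Longrightarrow> \<bar>g x\<bar> = c"
  shows "g constant_on S"
proof (rule continuous_finite_range_constant[OF assms(1,2)])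
  have "g ` S \<subseteq> {c, - c}"
    using assms(3) by (force simp: abs_if split: if_splits)
  then show "finite (g ` S)"
    using finite_subset by blast
qed

lemma general_helix_iff_rel_normal_slant_helix_if_velocity_parallel:
  fixes \<gamma> V :: "real \<Rightarrow> real^3" and f :: "real \<Rightarrow> real"
  assumes I: "is_interval I"
    and V_cont: "continuous_on I V"
    and V_norm: "\<And>s. s \<in> I \<Longrightarrow> norm (V s) = 1"
    and velocity: "\<And>s. s \<in> I \<Longrightarrow> (\<gamma> has_vector_derivative f s *\<^sub>R V s) (at s)"
    and regular: "regular_curve I \<gamma>"
  shows "general_helix I \<gamma> \<longleftrightarrow> rel_normal_slant_helix I V"
proof -
  have f_nonzero: "f s \<noteq> 0" if "s \<in> I" for s
    using regular that vector_derivative_at[OF velocity[OF that]] unfolding regular_curve_def by auto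
  have unit_tangent: "vector_derivative \<gamma> (at s) /\<^sub>R norm (vector_derivative \<gamma> (at s))
      = sgn (f s) *\<^sub>R V s" if "s \<in> I" for s
    using vector_derivative_normalized_eq_sgn_scaleR[OF velocity V_norm] that by simp
  show ?thesis
  proof
    assume "general_helix I \<gamma>"
    then obtain d c where d: "norm d = 1" and angle: "\<And>s. s \<in> I \<Longrightarrow> sgn (f s) * (V s \<bullet> d) = c"
      unfolding general_helix_def using unit_tangent by (metis inner_scaleR_left)
    have "\<bar>V s \<bullet> d\<bar> = \<bar>c\<bar>" if "s \<in> I" for s
      using angle[OF that] f_nonzero[OF that] by (auto simp: abs_mult abs_sgn_eq)
    then have "(\<lambda>s. V s \<bullet> d) constant_on I"
      using is_interval_connected[OF I] V_cont
      by (intro continuous_on_abs_constant_imp_constant continuous_intros) auto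
    then show "rel_normal_slant_helix I V"
      unfolding rel_normal_slant_helix_def constant_on_def using d by blast
  next
    assume "rel_normal_slant_helix I V"
    then obtain d c where d: "norm d = 1" and V_angle: "\<And>s. s \<in> I \<Longrightarrow> V s \<bullet> d = c"
      unfolding rel_normal_slant_helix_def by blast
    have "\<exists>k. \<forall>s\<in>I. sgn (f s) * c = k"
    proof (cases "c = 0")
      case False
      have "((\<lambda>s. \<gamma> s \<bullet> d) has_real_derivative f s * c) (at s)" if "s \<in> I" for s
        using bounded_linear.has_vector_derivative[OF bounded_linear_inner_left velocity[OF that],
            of d]
          V_angle[OF that]
        by (simp add: has_real_derivative_iff_has_vector_derivative)
      then have "(\<forall>s\<in>I. f s * c > 0) \<or> (\<forall>s\<in>I. f s * c < 0)"
        using f_nonzero False by (intro DERIV_nonzero_imp_sign_constant[OF I]) auto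
      then show ?thesis
        by (metis zero_less_mult_iff mult_less_0_iff sgn_pos sgn_neg)
    qed auto
    then show "general_helix I \<gamma>"
      unfolding general_helix_def using regular d unit_tangent V_angle by auto
  qed
qed

lemma velocity_parallel_V_if_tg_zero:
  assumes frame: "darboux_frame I \<alpha> T V U kg kn tg" and "open I"
    and tg: "\<And>s. s \<in> I \<Longrightarrow> tg s = 0" and kg: "\<And>s. s \<in> I \<Longrightarrow> kg s \<noteq> 0"
    and kg_diff: "\<And>s. s \<in> I \<Longrightarrow> kg differentiable (at s)"
    and \<gamma>: "\<And>s. s \<in> I \<Longrightarrow> \<gamma> s = \<alpha> s + (1 / kg s) *\<^sub>R V s"
  shows "\<exists>f. \<forall>s\<in>I. (\<gamma> has_vector_derivative f s *\<^sub>R V s) (at s)"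
proof (intro exI ballI)
  fix s assume "s \<in> I"
  have "((\<lambda>s. 1 / kg s) has_real_derivative - deriv kg s / (kg s)\<^sup>2) (at s)"
    using kg_diff[OF \<open>s \<in> I\<close>] kg[OF \<open>s \<in> I\<close>]
    by (auto intro!: derivative_eq_intros simp: DERIV_deriv_iff_real_differentiable power2_eq_square)
  from darboux_frame_has_vector_derivative_offset[OF frame \<open>s \<in> I\<close> DERIV_const[of 0] this]
  have "((\<lambda>s. \<alpha> s + 0 *\<^sub>R T s + (1 / kg s) *\<^sub>R V s) has_vector_derivative
          (- deriv kg s / (kg s)\<^sup>2) *\<^sub>R V s) (at s)"
    using tg[OF \<open>s \<in> I\<close>] kg[OF \<open>s \<in> I\<close>] by simp
  then show "(\<gamma> has_vector_derivative (- deriv kg s / (kg s)\<^sup>2) *\<^sub>R V s) (at s)"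
    by (rule has_vector_derivative_transform_within_open[OF _ \<open>open I\<close> \<open>s \<in> I\<close>]) (simp add: \<gamma>)
qed

lemma velocity_parallel_V_if_tg_nonzero:
  assumes frame: "darboux_frame I \<alpha> T V U kg kn tg" and "open I"
    and tg: "\<And>s. s \<in> I \<Longrightarrow> tg s \<noteq> 0"
    and diff: "\<And>s. s \<in> I \<Longrightarrow> kn differentiable (at s) \<and> tg differentiable (at s)"
    and \<omega>: "\<And>s. s \<in> I \<Longrightarrow> (\<omega> has_real_derivative kn s * kg s / tg s) (at s)"
    and \<Omega>: "\<And>s. s \<in> I \<Longrightarrow> (\<Omega> has_real_derivative exp (\<omega> s)) (at s)"
    and \<gamma>: "\<And>s. s \<in> I \<Longrightarrow> \<gamma> s = \<alpha> s + (exp (- \<omega> s) * (c - \<Omega> s)) *\<^sub>R T s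
                         + (- (kn s / tg s) * (exp (- \<omega> s) * (c - \<Omega> s))) *\<^sub>R V s"
  shows "\<exists>f. \<forall>s\<in>I. (\<gamma> has_vector_derivative f s *\<^sub>R V s) (at s)"
proof -
  define y1 where "y1 s = exp (- \<omega> s) * (c - \<Omega> s)" for s
  define y2 where "y2 s = - (kn s / tg s) * y1 s" for s
  have \<gamma>_offset: "\<gamma> s = \<alpha> s + y1 s *\<^sub>R T s + y2 s *\<^sub>R V s" if "s \<in> I" for s
    using \<gamma>[OF that] by (simp only: y1_def y2_def)
  have "(\<gamma> has_vector_derivative (y1 s * kg s + deriv y2 s) *\<^sub>R V s) (at s)" if s: "s \<in> I" for s
  proof -
    have "(y1 has_real_derivative
            exp (- \<omega> s) * - (kn s * kg s / tg s) * (c - \<Omega> s) + exp (- \<omega> s) * - exp (\<omega> s)) (at s)"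
      unfolding y1_def using \<omega>[OF s] \<Omega>[OF s] by (auto intro!: derivative_eq_intros)
    then have y1': "(y1 has_real_derivative - (kn s * kg s / tg s) * y1 s - 1) (at s)"
      by (rule DERIV_cong) (simp add: y1_def exp_minus field_simps)
    obtain kn' tg' where "(kn has_real_derivative kn') (at s)" "(tg has_real_derivative tg') (at s)"
      using diff[OF s] by (auto simp: real_differentiable_def)
    then have "y2 differentiable (at s)"
      unfolding y2_def[abs_def] real_differentiable_def using tg[OF s] y1'
      by (intro exI) (auto intro!: derivative_eq_intros)
    then have y2': "(y2 has_real_derivative deriv y2 s) (at s)"
      by (simp add: DERIV_deriv_iff_real_differentiable)
    have T_component: "1 + (- (kn s * kg s / tg s) * y1 s - 1) - y2 s * kg s = 0"
      by (simp add: y2_def)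
    have U_component: "y1 s * kn s + y2 s * tg s = 0"
      using tg[OF s] by (simp add: y2_def)
    have "((\<lambda>s. \<alpha> s + y1 s *\<^sub>R T s + y2 s *\<^sub>R V s) has_vector_derivative
            (y1 s * kg s + deriv y2 s) *\<^sub>R V s) (at s)"
      using darboux_frame_has_vector_derivative_offset[OF frame s y1' y2'] T_component U_component
      by simp
    then show ?thesis
      by (rule has_vector_derivative_transform_within_open[OF _ \<open>open I\<close> s])
         (simp add: \<gamma>_offset)
  qed
  then show ?thesis
    by (intro exI[of _ "\<lambda>s. y1 s * kg s + deriv y2 s"]) simp
qed

theorem theorem3p19:
  fixes I :: "real set"
    and \<alpha> T V U \<gamma> :: "real \<Rightarrow> real^3"
    and kg kn tg :: "real \<Rightarrow> real"
  assumes I: "is_interval I" "open I" "I \<noteq> {}"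
    and frame: "darboux_frame I \<alpha> T V U kg kn tg"
    and smooth: "\<forall>s\<in>I. kg differentiable (at s) \<and> kn differentiable (at s) \<and> tg differentiable (at s)"
    and cases:
      "((\<forall>s\<in>I. tg s = 0 \<and> kn s \<noteq> 0 \<and> kg s \<noteq> 0) \<and>
        (\<forall>s\<in>I. \<gamma> s = \<alpha> s + (1 / kg s) *\<^sub>R V s))
       \<or>
       (\<exists>(\<omega>::real \<Rightarrow> real) (\<Omega>::real \<Rightarrow> real) (c8::real).
          (\<forall>s\<in>I. tg s \<noteq> 0) \<and>
          (\<forall>s\<in>I. (\<omega> has_real_derivative (kn s * kg s / tg s)) (at s)) \<and>
          (\<forall>s\<in>I. (\<Omega> has_real_derivative exp (\<omega> s)) (at s)) \<and>
          (\<forall>s\<in>I. \<gamma> s = \<alpha> s + (exp (- \<omega> s) * (c8 - \<Omega> s)) *\<^sub>R T s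
                         + (- (kn s / tg s) * (exp (- \<omega> s) * (c8 - \<Omega> s))) *\<^sub>R V s))"
    and regular: "regular_curve I \<gamma>"
  shows "general_helix I \<gamma> \<longleftrightarrow> rel_normal_slant_helix I V"
proof -
  have "\<exists>f. \<forall>s\<in>I. (\<gamma> has_vector_derivative f s *\<^sub>R V s) (at s)"
    using cases
  proof (elim disjE exE conjE)
    assume "\<forall>s\<in>I. tg s = 0 \<and> kn s \<noteq> 0 \<and> kg s \<noteq> 0" "\<forall>s\<in>I. \<gamma> s = \<alpha> s + (1 / kg s) *\<^sub>R V s"
    then show ?thesis
      using smooth by (intro velocity_parallel_V_if_tg_zero[OF frame I(2)]) auto
  next
    fix \<omega> \<Omega> c8
    assume "\<forall>s\<in>I. tg s \<noteq> 0" "\<forall>s\<in>I. (\<omega> has_real_derivative kn s * kg s / tg s) (at s)"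
      "\<forall>s\<in>I. (\<Omega> has_real_derivative exp (\<omega> s)) (at s)"
      "\<forall>s\<in>I. \<gamma> s = \<alpha> s + (exp (- \<omega> s) * (c8 - \<Omega> s)) *\<^sub>R T s
                     + (- (kn s / tg s) * (exp (- \<omega> s) * (c8 - \<Omega> s))) *\<^sub>R V s"
    then show ?thesis
      using smooth by (intro velocity_parallel_V_if_tg_nonzero[OF frame I(2)]) auto
  qed
  then obtain f where velocity: "\<And>s. s \<in> I \<Longrightarrow> (\<gamma> has_vector_derivative f s *\<^sub>R V s) (at s)"
    by blast
  show ?thesis
    using darboux_frame_continuous_on_V[OF frame] darboux_frame_norm_V[OF frame] velocity regular
    by (rule general_helix_iff_rel_normal_slant_helix_if_velocity_parallel[OF I(1)])
qed

end
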